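(* Let $E$ be a finite set and let $\tau:2^{E}\rightarrow 2^{E}$ be a closure operator. Define $V:2^{E}\rightarrow 2^{E}$ by $V(X)=E-\tau(X)$. Then $(E,V)$ is a violator space.
   Context: A closure operator on $E$ is a map $\tau:2^E\to 2^E$ satisfying, for all $X,Y\subseteq E$: (C1) $X\subseteq\tau(X)$; (C2) $X\subseteq Y\Rightarrow \tau(X)\subseteq\tau(Y)$; (C3) $\tau(\tau(X))=\tau(X)$. A violator space is a pair $(H,V)$ with $H$ a finite set and $V:2^H\to 2^H$ such that (Consistency) $G\cap V(G)=\emptyset$ for all $G\subseteq H$, and (Locality) for all $F\subseteq G\subseteq H$ with $G\cap V(F)=\emptyset$ we have $V(G)=V(F)$. *)

theory Defs
  imports Main
begin

definition closure_operator :: "'a set \<Rightarrow> ('a set \<Rightarrow> 'a set) \<Rightarrow> bool" where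
  "closure_operator E \<tau> \<longleftrightarrow>
     (\<forall>X. X \<subseteq> E \<longrightarrow> \<tau> X \<subseteq> E) \<and>
     (\<forall>X. X \<subseteq> E \<longrightarrow> X \<subseteq> \<tau> X) \<and>
     (\<forall>X Y. X \<subseteq> Y \<and> Y \<subseteq> E \<longrightarrow> \<tau> X \<subseteq> \<tau> Y) \<and>
     (\<forall>X. X \<subseteq> E \<longrightarrow> \<tau> (\<tau> X) = \<tau> X)"

definition violator_space :: "'a set \<Rightarrow> ('a set \<Rightarrow> 'a set) \<Rightarrow> bool" where
  "violator_space H V \<longleftrightarrow> finite H \<and>
     (\<forall>G. G \<subseteq> H \<longrightarrow> V G \<subseteq> H) \<and>
     (\<forall>G. G \<subseteq> H \<longrightarrow> G \<inter> V G = {}) \<and>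
     (\<forall>F G. F \<subseteq> G \<and> G \<subseteq> H \<and> G \<inter> V F = {} \<longrightarrow> V G = V F)"

end

theory Submission
  imports Defs
begin

text \<open>Consistency is extensivity of \<open>\<tau>\<close>. For locality, \<open>G \<inter> V F = {}\<close> says
  \<open>F \<subseteq> G \<subseteq> \<tau> F\<close>; monotonicity and idempotence then squeeze \<open>\<tau> G\<close> between
  \<open>\<tau> F\<close> and \<open>\<tau> (\<tau> F) = \<tau> F\<close>.\<close>

lemma closure_operatorD:
  assumes "closure_operator E \<tau>"
  shows closure_operator_closed: "X \<subseteq> E \<Longrightarrow> \<tau> X \<subseteq> E"
    and closure_operator_extensive: "X \<subseteq> E \<Longrightarrow> X \<subseteq> \<tau> X"
    and closure_operator_mono: "X \<subseteq> Y \<Longrightarrow> Y \<subseteq> E \<Longrightarrow> \<tau> X \<subseteq> \<tau> Y"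
    and closure_operator_idem: "X \<subseteq> E \<Longrightarrow> \<tau> (\<tau> X) = \<tau> X"
  using assms unfolding closure_operator_def by simp_all

lemma closure_operator_closure_eq:
  assumes "closure_operator E \<tau>" and "F \<subseteq> G" and "G \<subseteq> \<tau> F" and "F \<subseteq> E"
  shows "\<tau> G = \<tau> F"
proof
  have "\<tau> F \<subseteq> E"
    using assms(1,4) by (rule closure_operator_closed)
  with assms(1,3) have "\<tau> G \<subseteq> \<tau> (\<tau> F)"
    by (rule closure_operator_mono)
  also have "\<dots> = \<tau> F"
    using assms(1,4) by (rule closure_operator_idem)
  finally show "\<tau> G \<subseteq> \<tau> F" .
  show "\<tau> F \<subseteq> \<tau> G"
    using assms(2,3) \<open>\<tau> F \<subseteq> E\<close> closure_operator_mono[OF assms(1)] by blast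
qed

theorem mainTheorem1:
  fixes E :: "'a set" and \<tau> :: "'a set \<Rightarrow> 'a set"
  assumes "finite E" and "closure_operator E \<tau>"
  shows "violator_space E (\<lambda>X. E - \<tau> X)"
  unfolding violator_space_def
proof (intro conjI allI impI)
  show "finite E" by (rule assms(1))
next
  fix G assume "G \<subseteq> E"
  then show "E - \<tau> G \<subseteq> E" by blast
next
  fix G assume "G \<subseteq> E"
  then show "G \<inter> (E - \<tau> G) = {}"
    using closure_operator_extensive[OF assms(2)] by blast
next
  fix F G assume "F \<subseteq> G \<and> G \<subseteq> E \<and> G \<inter> (E - \<tau> F) = {}"
  then have "\<tau> G = \<tau> F"
    by (intro closure_operator_closure_eq[OF assms(2)]) blast+
  then show "E - \<tau> G = E - \<tau> F" by simp
qed

end
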